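(* In the setting of the context, consider a Case 3 spacetime ($\partial_v r_-<0$). If there exist constants $\alpha\in(0,1)$ and $\varepsilon>0$ such that $$\alpha\frac{dx_+}{dv}+(1-\alpha)\frac{dx_-}{dv}>-\frac{h_c}{2}\alpha(1-\alpha)(1-\varepsilon)(x_+-x_-)^2$$ holds for all $v>v_0$ with $v_0$ sufficiently large, then the spacetime is of Class 2, i.e. some radially outgoing null geodesics emitted from the inner AH never reach the outer AH.
   Context: Spherically symmetric spacetime $ds^2=-f(v,r)A(v,r)^2dv^2+2A(v,r)\,dr\,dv+r^2d\Omega^2$ with $A>0$, $f,A\to1$ as $r\to\infty$, $f(v,0)=1$, $\partial_rf(v,0)=\partial_rA(v,0)=0$; $f(v,\cdot)$ has exactly two zeros $r_+(v)>r_-(v)$ (outer/inner apparent horizons, AHs), $f=F(r-r_+)(r-r_-)$ with $F>0$, and $h=AF>0$. Assumptions: $\partial_v r_+<0$; $r_\pm(v)\to r_c$ as $v\to\infty$; the sign of $\partial_v r_-$ is constant; the $v\to\infty$ limits of $A,F,h$ behave as analytic functions of $r$, so all $\partial_r^n h$ converge as $v\to\infty$; $h_c=\lim_{v\to\infty}h(v,r_c)$. With $x=r-r_c$, $x_\pm=r_\pm-r_c$ and $h$ regarded as a function of $(v,x)$, radially outgoing null geodesics solve $dx/dv=\tfrac12h(v,x)(x-x_+(v))(x-x_-(v))$. Case 3 means $\partial_v r_-<0$. In Case 3, Class 1 means all outgoing null geodesics emitted from the inner AH reach the outer AH; Class 2 means some of them do not. *)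

theory Defs
  imports "HOL-Analysis.Analysis"
begin

text \<open>Coordinates: advanced time v and areal radius r.
  With x = r - r_c one has dx/dv = dr/dv, so the outgoing null geodesic equation
  dx/dv = h (x - x_+)(x - x_-) / 2 is written here in the r coordinate.\<close>

definition metric_f :: "(real \<Rightarrow> real \<Rightarrow> real) \<Rightarrow> (real \<Rightarrow> real) \<Rightarrow> (real \<Rightarrow> real) \<Rightarrow> real \<Rightarrow> real \<Rightarrow> real"
  where "metric_f F rp rm v r = F v r * (r - rp v) * (r - rm v)"

definition metric_h :: "(real \<Rightarrow> real \<Rightarrow> real) \<Rightarrow> (real \<Rightarrow> real \<Rightarrow> real) \<Rightarrow> real \<Rightarrow> real \<Rightarrow> real"
  where "metric_h A F v r = A v r * F v r"

definition outgoing_null_geodesic ::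
  "(real \<Rightarrow> real \<Rightarrow> real) \<Rightarrow> (real \<Rightarrow> real) \<Rightarrow> (real \<Rightarrow> real) \<Rightarrow> real \<Rightarrow> (real \<Rightarrow> real) \<Rightarrow> bool"
  where "outgoing_null_geodesic h rp rm v1 r \<longleftrightarrow>
    (\<forall>v\<ge>v1. r v > 0 \<and>
       (r has_real_derivative (h v (r v) * (r v - rp v) * (r v - rm v) / 2)) (at v within {v1..}))"

definition emitted_from_inner_AH :: "(real \<Rightarrow> real) \<Rightarrow> real \<Rightarrow> (real \<Rightarrow> real) \<Rightarrow> bool"
  where "emitted_from_inner_AH rm v1 r \<longleftrightarrow> r v1 = rm v1"

definition reaches_outer_AH :: "(real \<Rightarrow> real) \<Rightarrow> real \<Rightarrow> (real \<Rightarrow> real) \<Rightarrow> bool"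
  where "reaches_outer_AH rp v1 r \<longleftrightarrow> (\<exists>v\<ge>v1. r v = rp v)"

definition class2 :: "(real \<Rightarrow> real \<Rightarrow> real) \<Rightarrow> (real \<Rightarrow> real) \<Rightarrow> (real \<Rightarrow> real) \<Rightarrow> bool"
  where "class2 h rp rm \<longleftrightarrow>
    (\<exists>v1 r. outgoing_null_geodesic h rp rm v1 r \<and> emitted_from_inner_AH rm v1 r
            \<and> \<not> reaches_outer_AH rp v1 r)"

end

theory Submission
  imports Defs
begin

text \<open>
  Put \<open>z = \<alpha> r\<^sub>+ + (1 - \<alpha>) r\<^sub>-\<close>. On \<open>z\<close> the outgoing speed
  \<open>h (r - r\<^sub>+) (r - r\<^sub>-) / 2\<close> equals \<open>-h(v, z) \<alpha> (1 - \<alpha>) (r\<^sub>+ - r\<^sub>-)\<^sup>2 / 2\<close>, and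
  \<open>h(v, z(v)) \<rightarrow> h\<^sub>c\<close> because \<open>h\<close> converges uniformly near \<open>r\<^sub>c\<close> to the analytic limit
  \<open>h\<^sub>\<infinity>\<close>. So the hypothesis says that \<open>z\<close> is eventually a strict supersolution of the
  geodesic equation, while \<open>r\<^sub>-\<close> is a strict subsolution: the speed vanishes on the horizon
  and \<open>r\<^sub>-\<close> decreases. A geodesic leaving the inner horizon late enough is therefore trapped
  between \<open>r\<^sub>-\<close> and \<open>z < r\<^sub>+\<close>. It is constructed by Picard iteration for the equation
  with the radius clamped to \<open>[r\<^sub>-(v), K]\<close>, where \<open>K\<close> bounds \<open>r\<^sub>+\<close> at late times; this
  equation is bounded and Lipschitz on bounded time intervals, and the trapping shows that the
  clamp never acts.
\<close>

section \<open>Picard iteration\<close>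

primrec picard_iter :: "(real \<Rightarrow> real \<Rightarrow> real) \<Rightarrow> real \<Rightarrow> real \<Rightarrow> nat \<Rightarrow> real \<Rightarrow> real" where
  "picard_iter g t0 y0 0 = (\<lambda>t. y0)"
| "picard_iter g t0 y0 (Suc n) = (\<lambda>t. y0 + integral {t0..t} (\<lambda>s. g s (picard_iter g t0 y0 n s)))"

lemma continuous_on_compose_graph:
  assumes "continuous_on ({t0..} \<times> UNIV) (\<lambda>(t, y). g t y)"
    and "continuous_on {t0..T} u"
  shows "continuous_on {t0..T} (\<lambda>s. g s (u s))"
proof -
  have "continuous_on {t0..T} (\<lambda>s. (s, u s))"
    by (intro continuous_intros assms(2))
  moreover have "(\<lambda>s. (s, u s)) ` {t0..T} \<subseteq> {t0..} \<times> UNIV"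
    by auto
  ultimately show ?thesis
    using continuous_on_compose2[OF assms(1)] by fastforce
qed

lemma picard_iter_continuous:
  assumes "continuous_on ({t0..} \<times> UNIV) (\<lambda>(t, y). g t y)"
  shows "continuous_on {t0..T} (picard_iter g t0 y0 n)"
proof (induction n)
  case (Suc n)
  have "continuous_on {t0..T} (\<lambda>t. integral {t0..t} (\<lambda>s. g s (picard_iter g t0 y0 n s)))"
    by (intro indefinite_integral_continuous_1 integrable_continuous_real
        continuous_on_compose_graph[OF assms Suc.IH])
  then show ?case
    by (simp add: continuous_on_add)
qed simp

lemma integral_shifted_power:
  assumes "a \<le> (b::real)"
  shows "integral {a..b} (\<lambda>s. (s - a) ^ n) = (b - a) ^ Suc n / Suc n"
proof -
  have "((\<lambda>s. (s - a) ^ Suc n / Suc n) has_vector_derivative (x - a) ^ n) (at x within {a..b})" for x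
    unfolding has_real_derivative_iff_has_vector_derivative[symmetric]
    by (auto intro!: derivative_eq_intros simp del: power_Suc)
  from integral_unique[OF fundamental_theorem_of_calculus[OF assms this]] show ?thesis
    by simp
qed

lemma picard_iter_step_bound:
  assumes cont: "continuous_on ({t0..} \<times> UNIV) (\<lambda>(t, y). g t y)"
    and bound: "\<And>s y. s \<in> {t0..T} \<Longrightarrow> \<bar>g s y\<bar> \<le> M"
    and lip: "\<And>s. s \<in> {t0..T} \<Longrightarrow> L-lipschitz_on UNIV (g s)"
    and t: "t \<in> {t0..T}"
  shows "\<bar>picard_iter g t0 y0 (Suc n) t - picard_iter g t0 y0 n t\<bar>
           \<le> M * L ^ n * (t - t0) ^ Suc n / fact (Suc n)"
  using t
proof (induction n arbitrary: t)
  case 0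
  have "\<bar>integral {t0..t} (\<lambda>s. g s y0)\<bar> \<le> integral {t0..t} (\<lambda>s. M)"
    using 0 bound continuous_on_compose_graph[OF cont continuous_on_const]
    by (intro integral_norm_bound_integral[where 'a=real, unfolded real_norm_def]
        integrable_continuous_real) auto
  then show ?case
    using 0 by (simp add: mult.commute)
next
  case (Suc n)
  let ?p = "picard_iter g t0 y0"
  let ?c = "L * M * L ^ n / fact (Suc n)"
  have integrable: "(\<lambda>s. g s (?p k s)) integrable_on {t0..t}" for k
    by (intro integrable_continuous_real continuous_on_compose_graph[OF cont picard_iter_continuous[OF cont]])
  have "\<bar>?p (Suc (Suc n)) t - ?p (Suc n) t\<bar>
      = \<bar>integral {t0..t} (\<lambda>s. g s (?p (Suc n) s) - g s (?p n s))\<bar>"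
    unfolding integral_diff[OF integrable integrable] by simp
  also have "\<dots> \<le> integral {t0..t} (\<lambda>s. ?c * (s - t0) ^ Suc n)"
  proof (intro integral_norm_bound_integral[where 'a=real, unfolded real_norm_def]
      integrable_diff integrable integrable_continuous_real)
    show "continuous_on {t0..t} (\<lambda>s. ?c * (s - t0) ^ Suc n)"
      by (intro continuous_intros)
    fix s assume s: "s \<in> {t0..t}"
    then have sT: "s \<in> {t0..T}"
      using Suc.prems by auto
    have "\<bar>g s (?p (Suc n) s) - g s (?p n s)\<bar> \<le> L * \<bar>?p (Suc n) s - ?p n s\<bar>"
      using lipschitz_onD[OF lip[OF sT]] by (simp add: dist_real_def)
    also have "\<dots> \<le> L * (M * L ^ n * (s - t0) ^ Suc n / fact (Suc n))"
      using Suc.IH[OF sT] lipschitz_on_nonneg[OF lip[OF sT]] by (rule mult_left_mono)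
    finally show "\<bar>g s (?p (Suc n) s) - g s (?p n s)\<bar> \<le> ?c * (s - t0) ^ Suc n"
      by simp
  qed
  also have "\<dots> = ?c * (t - t0) ^ Suc (Suc n) / Suc (Suc n)"
    using Suc.prems integral_shifted_power[of t0 t "Suc n"] by (simp del: power_Suc)
  also have "\<dots> = M * L ^ Suc n * (t - t0) ^ Suc (Suc n) / fact (Suc (Suc n))"
    by (simp add: field_simps)
  finally show ?case .
qed

lemma summable_picard_bound:
  fixes M L T :: real
  assumes "0 \<le> M" "0 \<le> L" "0 \<le> T"
  shows "summable (\<lambda>n. M * L ^ n * T ^ Suc n / fact (Suc n))"
proof (rule summable_comparison_test')
  show "summable (\<lambda>n. M * T * (inverse (fact n) * (L * T) ^ n))"
    by (intro summable_mult summable_exp)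
  fix n
  have "M * L ^ n * T ^ Suc n / fact (Suc n) \<le> M * L ^ n * T ^ Suc n / fact n"
    using assms by (intro divide_left_mono fact_mono) auto
  then show "norm (M * L ^ n * T ^ Suc n / fact (Suc n)) \<le> M * T * (inverse (fact n) * (L * T) ^ n)"
    using assms by (simp add: power_mult_distrib divide_simps ac_simps)
qed

lemma picard_iter_uniform_limit:
  assumes cont: "continuous_on ({t0..} \<times> UNIV) (\<lambda>(t, y). g t y)"
    and bounded_lipschitz:
      "\<And>T. \<exists>M L. \<forall>s\<in>{t0..T}. (\<forall>y. \<bar>g s y\<bar> \<le> M) \<and> L-lipschitz_on UNIV (g s)"
  obtains x where "\<And>T. t0 \<le> T \<Longrightarrow> uniform_limit {t0..T} (picard_iter g t0 y0) x sequentially"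
proof
  let ?p = "picard_iter g t0 y0"
  define d where "d i t = ?p (Suc i) t - ?p i t" for i t
  have telescope: "?p n t = y0 + (\<Sum>i<n. d i t)" for n t
    unfolding d_def using sum_lessThan_telescope[of "\<lambda>i. ?p i t" n] by simp
  fix T assume "t0 \<le> T"
  obtain M L where bound: "\<And>s y. s \<in> {t0..T} \<Longrightarrow> \<bar>g s y\<bar> \<le> M"
    and lip: "\<And>s. s \<in> {t0..T} \<Longrightarrow> L-lipschitz_on UNIV (g s)"
    using bounded_lipschitz[of T] by blast
  have "0 \<le> L" "0 \<le> M"
    using lipschitz_on_nonneg[OF lip] bound[of t0 y0] \<open>t0 \<le> T\<close> by auto
  define c where "c n = M * L ^ n * (T - t0) ^ Suc n / fact (Suc n)" for n
  have d_bound: "norm (d n t) \<le> c n" if "t \<in> {t0..T}" for n t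
  proof -
    have "\<bar>d n t\<bar> \<le> M * L ^ n * (t - t0) ^ Suc n / fact (Suc n)"
      unfolding d_def using picard_iter_step_bound[OF cont bound lip that] .
    also have "\<dots> \<le> c n"
      unfolding c_def using that \<open>0 \<le> L\<close> \<open>0 \<le> M\<close>
      by (intro divide_right_mono mult_left_mono power_mono) auto
    finally show ?thesis by simp
  qed
  have "summable c"
    unfolding c_def using \<open>t0 \<le> T\<close> \<open>0 \<le> L\<close> \<open>0 \<le> M\<close> by (intro summable_picard_bound) auto
  then have "uniform_limit {t0..T} (\<lambda>n t. \<Sum>i<n. d i t) (\<lambda>t. \<Sum>i. d i t) sequentially"
    using Weierstrass_m_test d_bound by blast
  then show "uniform_limit {t0..T} ?p (\<lambda>t. y0 + (\<Sum>i. d i t)) sequentially"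
    unfolding telescope by (intro uniform_limit_intros)
qed

lemma uniform_limit_lipschitz_compose:
  assumes lim: "uniform_limit S f l F"
    and lip: "\<And>s. s \<in> S \<Longrightarrow> L-lipschitz_on UNIV (g s)"
  shows "uniform_limit S (\<lambda>n s. g s (f n s)) (\<lambda>s. g s (l s)) F"
proof (rule uniform_limitI)
  fix e :: real assume "0 < e"
  then have "0 < e / (\<bar>L\<bar> + 1)"
    by simp
  from uniform_limitD[OF lim this]
  show "\<forall>\<^sub>F n in F. \<forall>s\<in>S. dist (g s (f n s)) (g s (l s)) < e"
  proof eventually_elim
    case (elim n)
    show ?case
    proof
      fix s assume "s \<in> S"
      have "dist (g s (f n s)) (g s (l s)) \<le> \<bar>L\<bar> * dist (f n s) (l s)"
        using lipschitz_onD[OF lip] lipschitz_on_nonneg[OF lip] \<open>s \<in> S\<close> by simp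
      also have "\<dots> \<le> \<bar>L\<bar> * (e / (\<bar>L\<bar> + 1))"
        using elim \<open>s \<in> S\<close> by (intro mult_left_mono) (auto intro: less_imp_le)
      also have "\<dots> < e"
        using \<open>0 < e\<close> by (simp add: field_simps)
      finally show "dist (g s (f n s)) (g s (l s)) < e" .
    qed
  qed
qed

lemma picard_limit_integral_eq:
  assumes cont: "continuous_on ({t0..} \<times> UNIV) (\<lambda>(t, y). g t y)"
    and lip: "\<And>s. s \<in> {t0..t} \<Longrightarrow> L-lipschitz_on UNIV (g s)"
    and lim: "uniform_limit {t0..t} (picard_iter g t0 y0) x sequentially"
    and "t0 \<le> t"
  shows "x t = y0 + integral {t0..t} (\<lambda>s. g s (x s))"
proof -
  let ?p = "picard_iter g t0 y0"
  obtain I J where I: "\<And>n. ((\<lambda>s. g s (?p n s)) has_integral I n) {t0..t}"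
    and J: "((\<lambda>s. g s (x s)) has_integral J) {t0..t}" and "I \<longlonglongrightarrow> J"
    using uniform_limit_lipschitz_compose[OF lim lip]
    by (rule uniform_limit_integral)
      (auto intro: continuous_on_compose_graph[OF cont picard_iter_continuous[OF cont]])
  then have "(\<lambda>n. ?p (Suc n) t) \<longlonglongrightarrow> y0 + integral {t0..t} (\<lambda>s. g s (x s))"
    by (simp add: integral_unique[OF I] integral_unique[OF J] tendsto_add)
  moreover have "(\<lambda>n. ?p (Suc n) t) \<longlonglongrightarrow> x t"
    using LIMSEQ_Suc[OF tendsto_uniform_limitI[OF lim]] \<open>t0 \<le> t\<close> by simp
  ultimately show ?thesis
    using LIMSEQ_unique by blast
qed

lemma ode_solution_exists:
  assumes cont: "continuous_on ({t0..} \<times> UNIV) (\<lambda>(t, y). g t y)"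
    and bounded_lipschitz:
      "\<And>T. \<exists>M L. \<forall>s\<in>{t0..T}. (\<forall>y. \<bar>g s y\<bar> \<le> M) \<and> L-lipschitz_on UNIV (g s)"
  obtains x where "x t0 = y0"
    and "\<And>t. t0 \<le> t \<Longrightarrow> (x has_real_derivative g t (x t)) (at t within {t0..})"
proof -
  let ?p = "picard_iter g t0 y0"
  obtain x where lim: "\<And>T. t0 \<le> T \<Longrightarrow> uniform_limit {t0..T} ?p x sequentially"
    using picard_iter_uniform_limit[OF cont bounded_lipschitz] by blast
  have g_x_cont: "continuous_on {t0..T} (\<lambda>s. g s (x s))" if "t0 \<le> T" for T
    using uniform_limit_theorem[OF _ lim[OF that]] picard_iter_continuous[OF cont]
    by (intro continuous_on_compose_graph[OF cont]) auto
  have integral_eq: "x t = y0 + integral {t0..t} (\<lambda>s. g s (x s))" if "t0 \<le> t" for t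
  proof -
    obtain M L where "\<And>s. s \<in> {t0..t} \<Longrightarrow> L-lipschitz_on UNIV (g s)"
      using bounded_lipschitz[of t] by blast
    then show ?thesis
      using picard_limit_integral_eq[OF cont _ lim[OF that] that] by blast
  qed
  have "(x has_real_derivative g t (x t)) (at t within {t0..})" if "t0 \<le> t" for t
  proof -
    have "((\<lambda>u. y0 + integral {t0..u} (\<lambda>s. g s (x s))) has_real_derivative g t (x t))
        (at t within {t0..t + 1})"
      using integral_has_real_derivative[OF g_x_cont] that
      by (auto intro!: derivative_eq_intros)
    then have "(x has_real_derivative g t (x t)) (at t within {t0..t + 1})"
      by (rule has_field_derivative_transform_within[where d = 1]) (use that integral_eq in auto)
    moreover have "at t within {t0..t + 1} = at t within {t0..}"
      by (rule at_within_nhd[of t "{..<t + 1}"]) auto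
    ultimately show ?thesis
      by simp
  qed
  moreover have "x t0 = y0"
    using integral_eq[of t0] by simp
  ultimately show ?thesis
    using that by blast
qed

section \<open>Comparison with barriers\<close>

lemma nonneg_by_barrier:
  fixes w w' :: "real \<Rightarrow> real"
  assumes start: "0 \<le> w t0"
    and deriv: "\<And>t. t0 \<le> t \<Longrightarrow> (w has_real_derivative w' t) (at t within {t0..})"
    and at_zero: "\<And>t. t0 \<le> t \<Longrightarrow> w t = 0 \<Longrightarrow> 0 < w' t"
    and "t0 \<le> t"
  shows "0 \<le> w t"
proof (rule ccontr)
  assume "\<not> 0 \<le> w t"
  then have "w t < 0" by simp
  have cont: "continuous_on {t0..t} w"
  proof (rule DERIV_continuous_on)
    fix s assume "s \<in> {t0..t}"
    then show "(w has_real_derivative w' s) (at s within {t0..t})"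
      using deriv has_field_derivative_subset[of w "w' s" s "{t0..}" "{t0..t}"] by auto
  qed
  define Z where "Z = {t0..t} \<inter> w -` {0}"
  obtain s where "s \<in> Z"
    using IVT2'[of w t 0 t0] \<open>w t < 0\<close> start \<open>t0 \<le> t\<close> cont unfolding Z_def by auto
  moreover have "closed Z"
    unfolding Z_def using cont by (intro continuous_closed_preimage) auto
  moreover have "bdd_above Z"
    unfolding Z_def by (rule bdd_above_Int1) simp
  ultimately have "Sup Z \<in> Z" and Z_le: "\<And>s. s \<in> Z \<Longrightarrow> s \<le> Sup Z"
    using closed_contains_Sup cSup_upper by blast+
  define u where "u = Sup Z"
  \<comment> \<open>\<open>u\<close> is the last zero before \<open>t\<close>; \<open>w\<close> is positive just after it, so it must vanish again later.\<close>
  have "t0 \<le> u" "u \<le> t" "w u = 0"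
    using \<open>Sup Z \<in> Z\<close> unfolding u_def Z_def by auto
  with \<open>w t < 0\<close> have "u < t"
    by (cases "u = t") auto
  obtain d where "0 < d" and inc: "\<And>h. 0 < h \<Longrightarrow> h < d \<Longrightarrow> w u < w (u + h)"
    using has_real_derivative_pos_inc_right[OF deriv at_zero] \<open>t0 \<le> u\<close> \<open>w u = 0\<close> by auto
  obtain e where "0 < e" "e < d" "u + e < t"
    using \<open>0 < d\<close> \<open>u < t\<close> by (intro that[of "min d (t - u) / 2"]) (auto simp: min_def field_simps)
  define s where "s = u + e"
  have "u < s" "s \<le> t" "0 < w s"
    using inc[of e] \<open>0 < e\<close> \<open>e < d\<close> \<open>u + e < t\<close> \<open>w u = 0\<close> unfolding s_def by auto
  moreover have "continuous_on {s..t} w"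
    using continuous_on_subset[OF cont] \<open>t0 \<le> u\<close> \<open>u < s\<close> by auto
  ultimately obtain s' where "s \<le> s'" "s' \<le> t" "w s' = 0"
    using IVT2'[of w t 0 s] \<open>w t < 0\<close> by auto
  then have "s' \<in> Z"
    unfolding Z_def using \<open>t0 \<le> u\<close> \<open>u < s\<close> by auto
  then show False
    using Z_le \<open>u < s\<close> \<open>s \<le> s'\<close> unfolding u_def by fastforce
qed

lemma ode_solution_between_barriers:
  fixes x l u :: "real \<Rightarrow> real"
  assumes x: "\<And>t. t0 \<le> t \<Longrightarrow> (x has_real_derivative F t (x t)) (at t within {t0..})"
    and l: "\<And>t. t0 \<le> t \<Longrightarrow> (l has_real_derivative l' t) (at t within {t0..})"
    and l_sub: "\<And>t. t0 \<le> t \<Longrightarrow> l' t < F t (l t)"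
    and u: "\<And>t. t0 \<le> t \<Longrightarrow> (u has_real_derivative u' t) (at t within {t0..})"
    and u_super: "\<And>t. t0 \<le> t \<Longrightarrow> F t (u t) < u' t"
    and start: "l t0 \<le> x t0" "x t0 \<le> u t0"
    and "t0 \<le> t"
  shows "l t \<le> x t \<and> x t \<le> u t"
proof
  have "0 \<le> x t - l t"
  proof (rule nonneg_by_barrier[where w = "\<lambda>t. x t - l t" and w' = "\<lambda>t. F t (x t) - l' t"])
    fix s assume "t0 \<le> s"
    show "((\<lambda>t. x t - l t) has_real_derivative F s (x s) - l' s) (at s within {t0..})"
      using x[OF \<open>t0 \<le> s\<close>] l[OF \<open>t0 \<le> s\<close>] by (rule DERIV_diff)
    show "x s - l s = 0 \<Longrightarrow> 0 < F s (x s) - l' s"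
      using l_sub[OF \<open>t0 \<le> s\<close>] by simp
  qed (use start \<open>t0 \<le> t\<close> in auto)
  then show "l t \<le> x t" by simp
  have "0 \<le> u t - x t"
  proof (rule nonneg_by_barrier[where w = "\<lambda>t. u t - x t" and w' = "\<lambda>t. u' t - F t (x t)"])
    fix s assume "t0 \<le> s"
    show "((\<lambda>t. u t - x t) has_real_derivative u' s - F s (x s)) (at s within {t0..})"
      using u[OF \<open>t0 \<le> s\<close>] x[OF \<open>t0 \<le> s\<close>] by (rule DERIV_diff)
    show "u s - x s = 0 \<Longrightarrow> 0 < u' s - F s (x s)"
      using u_super[OF \<open>t0 \<le> s\<close>] by simp
  qed (use start \<open>t0 \<le> t\<close> in auto)
  then show "x t \<le> u t" by simp
qed

lemma clamp_real: "(a::real) \<le> b \<Longrightarrow> clamp a b y = max a (min b y)"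
  unfolding clamp_def by (simp only: Basis_real_def) (simp add: max_def min_def)

lemma convex_combination_between:
  assumes "0 < \<alpha>" "\<alpha> < 1" "a < (b::real)"
  shows "a \<le> \<alpha> * b + (1 - \<alpha>) * a \<and> \<alpha> * b + (1 - \<alpha>) * a < b"
proof -
  have "0 < \<alpha> * (b - a)" "0 < (1 - \<alpha>) * (b - a)"
    using assms by simp_all
  then show ?thesis
    by (simp add: algebra_simps)
qed

lemma lipschitz_on_interval_of_deriv_bound:
  fixes f :: "real \<Rightarrow> real"
  assumes "\<And>x. x \<in> {a..b} \<Longrightarrow> (f has_real_derivative f' x) (at x within {a..b})"
    and "\<And>x. x \<in> {a..b} \<Longrightarrow> \<bar>f' x\<bar> \<le> C"
    and "0 \<le> C"
  shows "C-lipschitz_on {a..b} f"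
proof (rule lipschitz_onI)
  fix x y assume "x \<in> {a..b}" "y \<in> {a..b}"
  have "norm (f x - f y) \<le> C * norm (x - y)"
    by (rule field_differentiable_bound[of "{a..b}"]) (use assms \<open>x \<in> _\<close> \<open>y \<in> _\<close> in auto)
  then show "dist (f x) (f y) \<le> C * dist x y"
    by (simp add: dist_real_def)
qed fact

lemma continuous_on_deriv_mult:
  fixes f g :: "real \<Rightarrow> real"
  assumes "\<And>x. x \<in> S \<Longrightarrow> f differentiable (at x)" "\<And>x. x \<in> S \<Longrightarrow> g differentiable (at x)"
    and "\<And>x. x \<in> S \<Longrightarrow> deriv f differentiable (at x)" "\<And>x. x \<in> S \<Longrightarrow> deriv g differentiable (at x)"
  shows "continuous_on S (deriv (\<lambda>x. f x * g x))"
proof -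
  have "continuous_on S (\<lambda>x. deriv f x * g x + deriv g x * f x)"
    using assms
    by (intro continuous_at_imp_continuous_on ballI continuous_intros differentiable_imp_continuous_within)
      auto
  moreover have "deriv (\<lambda>x. f x * g x) x = deriv f x * g x + deriv g x * f x" if "x \<in> S" for x
    using assms(1,2)[OF that]
    by (intro DERIV_imp_deriv DERIV_mult) (simp_all add: DERIV_deriv_iff_real_differentiable)
  ultimately show ?thesis
    using continuous_on_eq by force
qed

lemma isCont_of_power_series:
  fixes f :: "real \<Rightarrow> real"
  assumes "0 < \<delta>" and sums: "\<And>r. \<bar>r - c\<bar> < \<delta> \<Longrightarrow> (\<lambda>n. a n * (r - c) ^ n) sums f r"
  shows "isCont f c"
proof -
  have "summable (\<lambda>n. a n * (\<delta> / 2) ^ n)"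
    using sums[of "c + \<delta> / 2"] \<open>0 < \<delta>\<close> sums_summable by auto
  then have "isCont (\<lambda>y. \<Sum>n. a n * y ^ n) (c - c)"
    by (rule isCont_powser) (use \<open>0 < \<delta>\<close> in simp)
  with isCont_o2[where f = "\<lambda>r. r - c" and a = c]
  have series_cont: "isCont (\<lambda>r. \<Sum>n. a n * (r - c) ^ n) c"
    by simp
  have "(\<Sum>n. a n * (r - c) ^ n) = f r" if "r \<in> ball c \<delta>" for r
    using sums_unique[OF sums, symmetric] that by (simp add: dist_real_def abs_minus_commute)
  then have "\<forall>\<^sub>F r in nhds c. (\<Sum>n. a n * (r - c) ^ n) = f r"
    using eventually_nhds_in_open[of "ball c \<delta>" c] \<open>0 < \<delta>\<close> by (auto elim!: eventually_mono)
  with series_cont show ?thesis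
    by (simp add: isCont_cong)
qed

lemma tendsto_uniform_limit_along:
  fixes f :: "'a \<Rightarrow> 'b::t2_space \<Rightarrow> 'c::metric_space"
  assumes lim: "uniform_limit S f g F" and "isCont g c" and "c \<in> S" and "F \<noteq> bot"
    and at_c: "((\<lambda>v. f v c) \<longlongrightarrow> L) F"
    and "(z \<longlongrightarrow> c) F" and "\<forall>\<^sub>F v in F. z v \<in> S"
  shows "((\<lambda>v. f v (z v)) \<longlongrightarrow> L) F"
proof -
  have "g c = L"
    using tendsto_unique[OF \<open>F \<noteq> bot\<close> tendsto_uniform_limitI[OF lim \<open>c \<in> S\<close>] at_c] .
  show ?thesis
  proof (rule tendstoI)
    fix e :: real assume "0 < e"
    then have "0 < e / 2" by simp
    have "((\<lambda>v. g (z v)) \<longlongrightarrow> g c) F"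
      using \<open>isCont g c\<close> \<open>(z \<longlongrightarrow> c) F\<close> by (rule isCont_tendsto_compose)
    from tendstoD[OF this \<open>0 < e / 2\<close>] have "\<forall>\<^sub>F v in F. dist (g (z v)) (g c) < e / 2" .
    moreover have "\<forall>\<^sub>F v in F. dist (f v (z v)) (g (z v)) < e / 2"
      using uniform_limitD[OF lim \<open>0 < e / 2\<close>] \<open>\<forall>\<^sub>F v in F. z v \<in> S\<close> by eventually_elim blast
    ultimately show "\<forall>\<^sub>F v in F. dist (f v (z v)) L < e"
    proof eventually_elim
      case (elim v)
      then show ?case
        using dist_triangle[of "f v (z v)" "g c" "g (z v)"] unfolding \<open>g c = L\<close>[symmetric]
        by linarith
    qed
  qed
qed

lemma tendsto_uniform_limit_along_analytic:
  fixes f :: "'a \<Rightarrow> real \<Rightarrow> real"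
  assumes "0 < \<delta>" and sums: "\<And>r. \<bar>r - c\<bar> < \<delta> \<Longrightarrow> (\<lambda>n. a n * (r - c) ^ n) sums g r"
    and lim: "uniform_limit {c - \<delta>..c + \<delta>} f g F" and "F \<noteq> bot"
    and at_c: "((\<lambda>v. f v c) \<longlongrightarrow> L) F" and z: "(z \<longlongrightarrow> c) F"
  shows "((\<lambda>v. f v (z v)) \<longlongrightarrow> L) F"
proof (rule tendsto_uniform_limit_along[OF lim _ _ \<open>F \<noteq> bot\<close> at_c z])
  show "isCont g c"
    using \<open>0 < \<delta>\<close> sums by (rule isCont_of_power_series)
  show "\<forall>\<^sub>F v in F. z v \<in> {c - \<delta>..c + \<delta>}"
    using tendstoD[OF z \<open>0 < \<delta>\<close>] by (auto elim!: eventually_mono simp: dist_real_def)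
qed (use \<open>0 < \<delta>\<close> in auto)

lemma eventually_gt_fraction_of_limit:
  fixes f :: "'a \<Rightarrow> real"
  assumes lim: "(f \<longlongrightarrow> c) F" and "F \<noteq> bot" and pos: "\<And>v. 0 < f v" and "0 < \<epsilon>"
  shows "\<forall>\<^sub>F v in F. c * (1 - \<epsilon>) < f v"
proof (cases "c = 0")
  case False
  have "0 \<le> c"
    by (rule tendsto_lowerbound[OF lim _ \<open>F \<noteq> bot\<close>]) (use pos less_imp_le in \<open>auto intro: always_eventually\<close>)
  with False \<open>0 < \<epsilon>\<close> have "c * (1 - \<epsilon>) < c"
    by (simp add: algebra_simps)
  then show ?thesis
    by (rule order_tendstoD(1)[OF lim])
qed (use pos in simp)

lemma bounded_if_uniformly_close:
  fixes f :: "real \<Rightarrow> 'a::metric_space \<Rightarrow> real"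
  assumes close: "\<And>v r. N \<le> v \<Longrightarrow> r \<in> S \<Longrightarrow> dist (f v r) (g r) < e"
    and "compact K" "K \<subseteq> S" "continuous_on K (f N)"
  shows "\<exists>C. \<forall>v\<ge>N. \<forall>r\<in>K. \<bar>f v r\<bar> \<le> C"
proof -
  obtain B where B: "\<And>r. r \<in> K \<Longrightarrow> norm (f N r) \<le> B"
    using continuous_on_compact_bound[OF \<open>compact K\<close> \<open>continuous_on K (f N)\<close>] by blast
  have "\<bar>f v r\<bar> \<le> B + 2 * e" if "N \<le> v" "r \<in> K" for v r
  proof -
    have "dist (f v r) (g r) < e" "dist (f N r) (g r) < e" "\<bar>f N r\<bar> \<le> B"
      using close that B \<open>K \<subseteq> S\<close> by auto
    then show ?thesis
      unfolding dist_real_def by linarith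
  qed
  then show ?thesis
    by blast
qed

definition outgoing_speed ::
  "(real \<Rightarrow> real \<Rightarrow> real) \<Rightarrow> (real \<Rightarrow> real) \<Rightarrow> (real \<Rightarrow> real) \<Rightarrow> real \<Rightarrow> real \<Rightarrow> real"
  where "outgoing_speed h rp rm v r = h v r * (r - rp v) * (r - rm v) / 2"

lemma outgoing_speed_has_real_derivative:
  assumes "(h v has_real_derivative h') (at r)"
  shows "(outgoing_speed h rp rm v has_real_derivative
           (h' * (r - rp v) * (r - rm v) + h v r * ((r - rm v) + (r - rp v))) / 2) (at r)"
proof -
  have lin: "((\<lambda>x. x - c) has_real_derivative 1) (at r)" for c
    by (auto intro!: derivative_eq_intros)
  have "((\<lambda>r. h v r * (r - rp v) * (r - rm v) / 2) has_real_derivative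
      ((h' * (r - rp v) + 1 * h v r) * (r - rm v) + 1 * (h v r * (r - rp v))) / 2) (at r)"
    by (intro DERIV_cdivide DERIV_mult assms lin)
  then show ?thesis
    unfolding outgoing_speed_def [abs_def] by (simp add: algebra_simps)
qed

lemma abs_outgoing_speed_le:
  assumes "\<bar>h v r\<bar> \<le> H" "\<bar>r - rp v\<bar> \<le> B" "\<bar>r - rm v\<bar> \<le> B" "0 \<le> H"
  shows "\<bar>outgoing_speed h rp rm v r\<bar> \<le> H * B * B / 2"
proof -
  have "\<bar>outgoing_speed h rp rm v r\<bar> = \<bar>h v r\<bar> * \<bar>r - rp v\<bar> * \<bar>r - rm v\<bar> / 2"
    unfolding outgoing_speed_def by (simp add: abs_mult)
  also have "\<dots> \<le> H * B * B / 2"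
    using assms by (intro divide_right_mono mult_mono) auto
  finally show ?thesis .
qed

lemma outgoing_speed_lipschitz_on:
  assumes deriv: "\<And>r. r \<in> {a..b} \<Longrightarrow> (h v has_real_derivative h' r) (at r)"
    and h_le: "\<And>r. r \<in> {a..b} \<Longrightarrow> \<bar>h v r\<bar> \<le> H" and h'_le: "\<And>r. r \<in> {a..b} \<Longrightarrow> \<bar>h' r\<bar> \<le> C"
    and dist_le: "\<And>r. r \<in> {a..b} \<Longrightarrow> \<bar>r - rp v\<bar> \<le> B \<and> \<bar>r - rm v\<bar> \<le> B"
    and "0 \<le> H" "0 \<le> C" "0 \<le> B"
  shows "((C * B * B + H * (B + B)) / 2)-lipschitz_on {a..b} (outgoing_speed h rp rm v)"
proof (rule lipschitz_on_interval_of_deriv_bound)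
  fix r assume r: "r \<in> {a..b}"
  show "(outgoing_speed h rp rm v has_real_derivative
      (h' r * (r - rp v) * (r - rm v) + h v r * ((r - rm v) + (r - rp v))) / 2) (at r within {a..b})"
    by (rule has_field_derivative_at_within[OF outgoing_speed_has_real_derivative[where h = h, OF deriv[OF r]]])
  have "\<bar>h' r * (r - rp v) * (r - rm v) + h v r * ((r - rm v) + (r - rp v))\<bar>
      \<le> \<bar>h' r\<bar> * \<bar>r - rp v\<bar> * \<bar>r - rm v\<bar> + \<bar>h v r\<bar> * \<bar>(r - rm v) + (r - rp v)\<bar>"
    using abs_triangle_ineq[of "h' r * (r - rp v) * (r - rm v)" "h v r * ((r - rm v) + (r - rp v))"]
    by (simp add: abs_mult)
  also have "\<dots> \<le> C * B * B + H * (B + B)"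
    using h_le[OF r] h'_le[OF r] dist_le[OF r] \<open>0 \<le> H\<close> \<open>0 \<le> C\<close>
      abs_triangle_ineq[of "r - rm v" "r - rp v"]
    by (intro add_mono mult_mono) auto
  finally show "\<bar>(h' r * (r - rp v) * (r - rm v) + h v r * ((r - rm v) + (r - rp v))) / 2\<bar>
      \<le> (C * B * B + H * (B + B)) / 2"
    by simp
qed (use assms(5-) in simp)

lemma outgoing_speed_convex_combination:
  "outgoing_speed h rp rm v (\<alpha> * rp v + (1 - \<alpha>) * rm v)
     = - h v (\<alpha> * rp v + (1 - \<alpha>) * rm v) * (\<alpha> * (1 - \<alpha>) * (rp v - rm v)\<^sup>2) / 2"
  unfolding outgoing_speed_def by (simp add: power2_eq_square algebra_simps)

lemma convex_combination_supersolution: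
  assumes "0 < \<alpha>" "\<alpha> < 1" "rm v < rp v"
    and slope: "\<alpha> * rp' + (1 - \<alpha>) * rm' > - (hc / 2) * \<alpha> * (1 - \<alpha>) * (1 - \<epsilon>) * (rp v - rm v)\<^sup>2"
    and h_large: "hc * (1 - \<epsilon>) < h v (\<alpha> * rp v + (1 - \<alpha>) * rm v)"
  shows "outgoing_speed h rp rm v (\<alpha> * rp v + (1 - \<alpha>) * rm v) < \<alpha> * rp' + (1 - \<alpha>) * rm'"
proof -
  let ?Q = "\<alpha> * (1 - \<alpha>) * (rp v - rm v)\<^sup>2"
  have "0 < ?Q"
    using assms(1-3) by simp
  with h_large have "hc * (1 - \<epsilon>) * ?Q < h v (\<alpha> * rp v + (1 - \<alpha>) * rm v) * ?Q"
    by (rule mult_strict_right_mono)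
  moreover have "- (hc / 2) * \<alpha> * (1 - \<alpha>) * (1 - \<epsilon>) * (rp v - rm v)\<^sup>2 = - (hc * (1 - \<epsilon>) * ?Q) / 2"
    by (simp add: field_simps)
  ultimately show ?thesis
    using slope unfolding outgoing_speed_convex_combination by linarith
qed

lemma continuous_on_metric_h:
  "continuous_on S (\<lambda>(v, r). A v r) \<Longrightarrow> continuous_on S (\<lambda>(v, r). F v r)
    \<Longrightarrow> continuous_on S (\<lambda>(v, r). metric_h A F v r)"
  unfolding metric_h_def case_prod_unfold by (rule continuous_on_mult)

lemma metric_h_differentiable:
  "A v differentiable (at r) \<Longrightarrow> F v differentiable (at r) \<Longrightarrow> metric_h A F v differentiable (at r)"
  unfolding metric_h_def [abs_def] by simp

lemma continuous_on_deriv_metric_h: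
  assumes "\<And>n r. 0 < r \<Longrightarrow> (deriv ^^ n) (A v) differentiable (at r)"
    and "\<And>n r. 0 < r \<Longrightarrow> (deriv ^^ n) (F v) differentiable (at r)"
  shows "continuous_on {0<..} (deriv (metric_h A F v))"
  unfolding metric_h_def [abs_def]
  using assms[of _ 0] assms[of _ 1] by (intro continuous_on_deriv_mult) auto

section \<open>Trapping the geodesic emitted from the inner horizon\<close>

locale inner_horizon_flow =
  fixes h :: "real \<Rightarrow> real \<Rightarrow> real" and rp rm :: "real \<Rightarrow> real" and N K :: real
  assumes h_continuous: "continuous_on (UNIV \<times> {0<..}) (\<lambda>(v, r). h v r)"
    and h_differentiable: "\<And>v r. 0 < r \<Longrightarrow> h v differentiable (at r)"
    and deriv_h_bounded: "\<And>T. N \<le> T \<Longrightarrow> \<exists>C. \<forall>v\<in>{N..T}. \<forall>r\<in>{rm T..K}. \<bar>deriv (h v) r\<bar> \<le> C"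
    and rm_differentiable: "\<And>v. N \<le> v \<Longrightarrow> rm differentiable (at v)"
    and rm_decreasing: "\<And>v. N \<le> v \<Longrightarrow> deriv rm v < 0"
    and rp_continuous: "continuous_on {N..} rp"
    and horizon_bounds: "\<And>v. N \<le> v \<Longrightarrow> 0 < rm v \<and> rm v < rp v \<and> rp v \<le> K"
begin

lemma rm_has_real_derivative: "N \<le> v \<Longrightarrow> (rm has_real_derivative deriv rm v) (at v)"
  using rm_differentiable DERIV_deriv_iff_real_differentiable by blast

lemma rm_antimono:
  assumes "N \<le> s" "s \<le> T"
  shows "rm T \<le> rm s"
proof (cases "s = T")
  case False
  have "rm T < rm s"
  proof (rule DERIV_neg_imp_decreasing[of s T rm])
    show "s < T"
      using False assms by simp
    fix x assume "s \<le> x" "x \<le> T"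
    then show "\<exists>y. DERIV rm x :> y \<and> y < 0"
      using assms by (intro exI[of _ "deriv rm x"] conjI rm_has_real_derivative rm_decreasing) auto
  qed
  then show ?thesis by simp
qed simp

lemma rm_le_K: "N \<le> t \<Longrightarrow> rm t \<le> K"
  using horizon_bounds[of t] by simp

lemma rm_continuous: "continuous_on {N..} rm"
  by (intro continuous_at_imp_continuous_on ballI differentiable_imp_continuous_within rm_differentiable)
    simp

definition clamped_speed :: "real \<Rightarrow> real \<Rightarrow> real"
  where "clamped_speed t y = outgoing_speed h rp rm t (clamp (rm t) K y)"

lemma clamped_speed_eq:
  "N \<le> t \<Longrightarrow> rm t \<le> y \<Longrightarrow> y \<le> K \<Longrightarrow> clamped_speed t y = outgoing_speed h rp rm t y"
  using horizon_bounds[of t] by (simp add: clamped_speed_def clamp_real)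

lemma clamped_speed_continuous: "continuous_on ({N..} \<times> UNIV) (\<lambda>(t, y). clamped_speed t y)"
proof -
  let ?c = "\<lambda>p. max (rm (fst p)) (min K (snd p))"
  have fst_cont: "continuous_on ({N..} \<times> UNIV) (\<lambda>p. f (fst p))" if "continuous_on {N..} f" for f
    by (rule continuous_on_compose2[OF that continuous_on_fst]) auto
  have c_cont: "continuous_on ({N..} \<times> UNIV) ?c"
    by (intro continuous_intros fst_cont rm_continuous)
  have "continuous_on ({N..} \<times> UNIV) (\<lambda>p. (\<lambda>(v, r). h v r) (fst p, ?c p))"
    by (rule continuous_on_compose2[OF h_continuous])
      (use c_cont horizon_bounds in \<open>auto intro!: continuous_intros simp: less_max_iff_disj\<close>)
  then have "continuous_on ({N..} \<times> UNIV) (\<lambda>p. outgoing_speed h rp rm (fst p) (?c p))"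
    unfolding outgoing_speed_def by (auto intro!: continuous_intros c_cont fst_cont rm_continuous rp_continuous)
  then show ?thesis
    by (rule continuous_on_eq) (auto simp: clamped_speed_def clamp_real rm_le_K)
qed

lemma outgoing_speed_bounded_lipschitz:
  assumes "N \<le> T"
  shows "\<exists>M L. \<forall>t\<in>{N..T}. (\<forall>r\<in>{rm T..K}. \<bar>outgoing_speed h rp rm t r\<bar> \<le> M)
                              \<and> L-lipschitz_on {rm T..K} (outgoing_speed h rp rm t)"
proof -
  have "0 < rm T" "rm T \<le> K"
    using horizon_bounds[of T] assms by auto
  have "compact ({N..T} \<times> {rm T..K})" "{N..T} \<times> {rm T..K} \<subseteq> UNIV \<times> {0<..}"
    using \<open>0 < rm T\<close> by (auto intro: compact_Times)
  then obtain H where "0 \<le> H"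
    and H: "\<And>p. p \<in> {N..T} \<times> {rm T..K} \<Longrightarrow> norm ((\<lambda>(v, r). h v r) p) \<le> H"
    using continuous_on_compact_bound continuous_on_subset[OF h_continuous] by metis
  obtain C where C: "\<And>t r. t \<in> {N..T} \<Longrightarrow> r \<in> {rm T..K} \<Longrightarrow> \<bar>deriv (h t) r\<bar> \<le> C"
    using deriv_h_bounded[OF assms] by blast
  have "0 \<le> C"
    using C[of N K] assms \<open>rm T \<le> K\<close> by fastforce
  have dist_le: "\<bar>r - rp t\<bar> \<le> K \<and> \<bar>r - rm t\<bar> \<le> K" if "t \<in> {N..T}" "r \<in> {rm T..K}" for t r
    using that horizon_bounds[of t] \<open>0 < rm T\<close> by auto
  have "(h t has_real_derivative deriv (h t) r) (at r)" if "r \<in> {rm T..K}" for t r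
    using h_differentiable[of r t] that \<open>0 < rm T\<close> by (simp add: DERIV_deriv_iff_real_differentiable)
  then show ?thesis
    using H C dist_le \<open>0 \<le> H\<close> \<open>0 \<le> C\<close> \<open>0 < rm T\<close> \<open>rm T \<le> K\<close>
    by (intro exI[of _ "H * K * K / 2"] exI[of _ "(C * K * K + H * (K + K)) / 2"] ballI conjI
        abs_outgoing_speed_le outgoing_speed_lipschitz_on) auto
qed

lemma clamped_speed_bounded_lipschitz:
  "\<exists>M L. \<forall>t\<in>{N..T}. (\<forall>y. \<bar>clamped_speed t y\<bar> \<le> M) \<and> L-lipschitz_on UNIV (clamped_speed t)"
proof (cases "N \<le> T")
  case True
  then obtain M L where bound: "\<And>t r. t \<in> {N..T} \<Longrightarrow> r \<in> {rm T..K} \<Longrightarrow> \<bar>outgoing_speed h rp rm t r\<bar> \<le> M"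
    and lip: "\<And>t. t \<in> {N..T} \<Longrightarrow> L-lipschitz_on {rm T..K} (outgoing_speed h rp rm t)"
    using outgoing_speed_bounded_lipschitz by blast
  have clamp_range: "clamp (rm t) K y \<in> {rm T..K}" if "t \<in> {N..T}" for t y
    using that rm_antimono[of t T] rm_le_K[of t] by (auto simp: clamp_real)
  have "1-lipschitz_on UNIV (clamp (rm t) K)" for t
    by (rule lipschitz_onI) (auto simp: dist_clamps_le_dist_args)
  then have "(L * 1)-lipschitz_on UNIV (clamped_speed t)" if "t \<in> {N..T}" for t
    unfolding clamped_speed_def
    by (rule lipschitz_on_compose2) (use lip[OF that] clamp_range[OF that] in \<open>auto intro: lipschitz_on_subset\<close>)
  then show ?thesis
    using bound clamp_range unfolding clamped_speed_def by (intro exI[of _ M] exI[of _ L]) auto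
qed simp

theorem class2_if_supersolution:
  assumes z_deriv: "\<And>v. N \<le> v \<Longrightarrow> (z has_real_derivative z' v) (at v)"
    and z_super: "\<And>v. N \<le> v \<Longrightarrow> outgoing_speed h rp rm v (z v) < z' v"
    and z_between: "\<And>v. N \<le> v \<Longrightarrow> rm v \<le> z v \<and> z v < rp v"
  shows "class2 h rp rm"
proof -
  obtain x where "x N = rm N"
    and x_deriv: "\<And>t. N \<le> t \<Longrightarrow> (x has_real_derivative clamped_speed t (x t)) (at t within {N..})"
    using ode_solution_exists[OF clamped_speed_continuous clamped_speed_bounded_lipschitz] by blast
  have z_le: "z t \<le> K" if "N \<le> t" for t
    using z_between[OF that] horizon_bounds[OF that] by simp
  have rm_sub: "(rm has_real_derivative deriv rm s) (at s within {N..})"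
    "deriv rm s < clamped_speed s (rm s)" if "N \<le> s" for s
    using rm_has_real_derivative[OF that] rm_decreasing[OF that] that
    by (auto intro: has_field_derivative_at_within simp: clamped_speed_eq rm_le_K outgoing_speed_def)
  have z_super': "(z has_real_derivative z' s) (at s within {N..})"
    "clamped_speed s (z s) < z' s" if "N \<le> s" for s
    using z_deriv[OF that] z_super[OF that] z_between[OF that] z_le[OF that] that
    by (auto intro: has_field_derivative_at_within simp: clamped_speed_eq)
  have trapped: "rm t \<le> x t \<and> x t \<le> z t" if "N \<le> t" for t
    using ode_solution_between_barriers[where F = clamped_speed, OF x_deriv rm_sub z_super']
      \<open>x N = rm N\<close> z_between that by auto
  show ?thesis
    unfolding class2_def outgoing_null_geodesic_def emitted_from_inner_AH_def reaches_outer_AH_def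
  proof (intro exI conjI allI impI)
    fix v assume "N \<le> v"
    show "0 < x v"
      using trapped[OF \<open>N \<le> v\<close>] horizon_bounds[OF \<open>N \<le> v\<close>] by linarith
    show "(x has_real_derivative h v (x v) * (x v - rp v) * (x v - rm v) / 2) (at v within {N..})"
      using x_deriv[OF \<open>N \<le> v\<close>] trapped[OF \<open>N \<le> v\<close>] z_le[OF \<open>N \<le> v\<close>] \<open>N \<le> v\<close>
      by (simp add: clamped_speed_eq outgoing_speed_def)
  next
    show "\<not> (\<exists>v\<ge>N. x v = rp v)"
      using trapped z_between by (metis not_less)
  qed fact
qed

end

theorem class2_if_eventual_supersolution:
  fixes h :: "real \<Rightarrow> real \<Rightarrow> real" and rp rm z z' g :: "real \<Rightarrow> real"
  assumes h_continuous: "continuous_on (UNIV \<times> {0<..}) (\<lambda>(v, r). h v r)"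
    and h_differentiable: "\<And>v r. 0 < r \<Longrightarrow> h v differentiable (at r)"
    and deriv_h_continuous: "\<And>v. continuous_on {0<..} (deriv (h v))"
    and deriv_h_limit: "uniform_limit {c - \<delta>..c + \<delta>} (\<lambda>v. deriv (h v)) g at_top" and "0 < \<delta>"
    and rm_differentiable: "\<And>v. rm differentiable (at v)" and rm_decreasing: "\<And>v. deriv rm v < 0"
    and rp_differentiable: "\<And>v. rp differentiable (at v)"
    and horizons: "\<And>v. 0 < rm v \<and> rm v < rp v"
    and rm_lim: "(rm \<longlongrightarrow> c) at_top" and rp_lim: "(rp \<longlongrightarrow> c) at_top"
    and z_deriv: "\<And>v. (z has_real_derivative z' v) (at v)"
    and z_between: "\<And>v. rm v \<le> z v \<and> z v < rp v"
    and z_super: "\<forall>\<^sub>F v in at_top. outgoing_speed h rp rm v (z v) < z' v"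
  shows "class2 h rp rm"
proof -
  have "\<forall>\<^sub>F v in at_top. c - \<delta> < rm v \<and> rp v < c + \<delta>
      \<and> (\<forall>r\<in>{c - \<delta>..c + \<delta>}. dist (deriv (h v) r) (g r) < 1) \<and> outgoing_speed h rp rm v (z v) < z' v"
    using order_tendstoD(1)[OF rm_lim, of "c - \<delta>"] order_tendstoD(2)[OF rp_lim, of "c + \<delta>"]
      uniform_limitD[OF deriv_h_limit zero_less_one] z_super \<open>0 < \<delta>\<close>
    by (intro eventually_conj) auto
  then obtain N where N: "\<And>v. N \<le> v \<Longrightarrow> c - \<delta> < rm v \<and> rp v < c + \<delta>
      \<and> (\<forall>r\<in>{c - \<delta>..c + \<delta>}. dist (deriv (h v) r) (g r) < 1) \<and> outgoing_speed h rp rm v (z v) < z' v"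
    unfolding eventually_at_top_linorder by blast
  interpret inner_horizon_flow h rp rm N "c + \<delta>"
  proof
    show "\<exists>C. \<forall>v\<in>{N..T}. \<forall>r\<in>{rm T..c + \<delta>}. \<bar>deriv (h v) r\<bar> \<le> C" if "N \<le> T" for T
    proof -
      have "{rm T..c + \<delta>} \<subseteq> {c - \<delta>..c + \<delta>}" "{rm T..c + \<delta>} \<subseteq> {0<..}"
        using N[OF that] horizons[of T] by auto
      then have "\<exists>C. \<forall>v\<ge>N. \<forall>r\<in>{rm T..c + \<delta>}. \<bar>deriv (h v) r\<bar> \<le> C"
        using N continuous_on_subset[OF deriv_h_continuous]
        by (intro bounded_if_uniformly_close[where S = "{c - \<delta>..c + \<delta>}" and g = g and e = 1]) auto
      then show ?thesis
        by (meson atLeastAtMost_iff)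
    qed
    show "continuous_on {N..} rp"
      using rp_differentiable
      by (intro continuous_at_imp_continuous_on ballI differentiable_imp_continuous_within)
    show "0 < rm v \<and> rm v < rp v \<and> rp v \<le> c + \<delta>" if "N \<le> v" for v
      using horizons[of v] N[OF that] by auto
  qed (use h_differentiable rm_differentiable rm_decreasing continuous_on_subset[OF h_continuous] in auto)
  show ?thesis
    by (rule class2_if_supersolution[of z z']) (use z_deriv z_between N in auto)
qed

theorem proposition7:
  fixes A F :: "real \<Rightarrow> real \<Rightarrow> real"
    and rp rm :: "real \<Rightarrow> real"
    and rc hc :: real
    and hinf :: "real \<Rightarrow> real"
  defines "f \<equiv> metric_f F rp rm"
    and "h \<equiv> metric_h A F"
  assumes A_pos: "\<And>v r. r \<ge> 0 \<Longrightarrow> A v r > 0"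
    and F_pos: "\<And>v r. r \<ge> 0 \<Longrightarrow> F v r > 0"
    and A_cont: "continuous_on (UNIV \<times> {0..}) (\<lambda>(v, r). A v r)"
    and F_cont: "continuous_on (UNIV \<times> {0..}) (\<lambda>(v, r). F v r)"
    and A_smooth: "\<And>v n r. r > 0 \<Longrightarrow> (deriv ^^ n) (A v) differentiable (at r)"
    and F_smooth: "\<And>v n r. r > 0 \<Longrightarrow> (deriv ^^ n) (F v) differentiable (at r)"
    and f_infty: "\<And>v. ((f v) \<longlongrightarrow> 1) at_top"
    and A_infty: "\<And>v. ((A v) \<longlongrightarrow> 1) at_top"
    and f_zero: "\<And>v. f v 0 = 1"
    and f_reg: "\<And>v. (f v has_real_derivative 0) (at 0 within {0..})"
    and A_reg: "\<And>v. (A v has_real_derivative 0) (at 0 within {0..})"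
    and horizons: "\<And>v. 0 < rm v \<and> rm v < rp v"
    and two_zeros: "\<And>v. {r. r \<ge> 0 \<and> f v r = 0} = {rm v, rp v}"
    and rp_diff: "\<And>v. rp differentiable (at v)"
    and rm_diff: "\<And>v. rm differentiable (at v)"
    and rp_decr: "\<And>v. deriv rp v < 0"
    and case3: "\<And>v. deriv rm v < 0"
    and rp_lim: "(rp \<longlongrightarrow> rc) at_top"
    and rm_lim: "(rm \<longlongrightarrow> rc) at_top"
    and hinf_analytic: "\<exists>\<delta>>0. (\<exists>a :: nat \<Rightarrow> real. \<forall>r. \<bar>r - rc\<bar> < \<delta> \<longrightarrow>
                           (\<lambda>n. a n * (r - rc) ^ n) sums hinf r)
         \<and> (\<forall>n. uniform_limit {rc - \<delta> .. rc + \<delta>} (\<lambda>v r. (deriv ^^ n) (h v) r)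
                                 ((deriv ^^ n) hinf) at_top)"
    and hc_def: "((\<lambda>v. h v rc) \<longlongrightarrow> hc) at_top"
    and cond: "\<exists>\<alpha> \<epsilon> v0. 0 < \<alpha> \<and> \<alpha> < 1 \<and> \<epsilon> > 0 \<and>
         (\<forall>v>v0. \<alpha> * deriv rp v + (1 - \<alpha>) * deriv rm v
                  > - (hc / 2) * \<alpha> * (1 - \<alpha>) * (1 - \<epsilon>) * (rp v - rm v)^2)"
  shows "class2 h rp rm"
proof -
  obtain \<alpha> \<epsilon> v0 where \<alpha>: "0 < \<alpha>" "\<alpha> < 1" and "0 < \<epsilon>"
    and slope: "\<And>v. v0 < v \<Longrightarrow> \<alpha> * deriv rp v + (1 - \<alpha>) * deriv rm v
                  > - (hc / 2) * \<alpha> * (1 - \<alpha>) * (1 - \<epsilon>) * (rp v - rm v)^2"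
    using cond by blast
  obtain \<delta> a where "0 < \<delta>" and sums: "\<And>r. \<bar>r - rc\<bar> < \<delta> \<Longrightarrow> (\<lambda>n. a n * (r - rc) ^ n) sums hinf r"
    and U: "\<And>n. uniform_limit {rc - \<delta>..rc + \<delta>} (\<lambda>v. (deriv ^^ n) (h v)) ((deriv ^^ n) hinf) at_top"
    using hinf_analytic by blast
  define z where "z v = \<alpha> * rp v + (1 - \<alpha>) * rm v" for v
  have z_between: "rm v \<le> z v \<and> z v < rp v" for v
    unfolding z_def using convex_combination_between[OF \<alpha>] horizons by blast
  have z_nonneg: "0 \<le> z v" for v
    using z_between[of v] horizons[of v] by linarith
  have z_deriv: "(z has_real_derivative \<alpha> * deriv rp v + (1 - \<alpha>) * deriv rm v) (at v)" for v
    unfolding z_def [abs_def] using rp_diff[of v] rm_diff[of v]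
    by (intro DERIV_add DERIV_cmult) (simp_all add: DERIV_deriv_iff_real_differentiable)
  have z_lim: "(z \<longlongrightarrow> rc) at_top"
    using tendsto_add[OF tendsto_mult_left[OF rp_lim] tendsto_mult_left[OF rm_lim], of \<alpha> "1 - \<alpha>"]
    unfolding z_def by (simp add: algebra_simps)
  have "((\<lambda>v. h v (z v)) \<longlongrightarrow> hc) at_top"
    by (rule tendsto_uniform_limit_along_analytic[where f = h, OF \<open>0 < \<delta>\<close> sums _ _ hc_def z_lim])
      (use U[of 0] in auto)
  then have "\<forall>\<^sub>F v in at_top. hc * (1 - \<epsilon>) < h v (z v)"
    using A_pos[OF z_nonneg] F_pos[OF z_nonneg] \<open>0 < \<epsilon>\<close>
    by (intro eventually_gt_fraction_of_limit) (auto simp: h_def metric_h_def)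
  then have z_super:
    "\<forall>\<^sub>F v in at_top. outgoing_speed h rp rm v (z v) < \<alpha> * deriv rp v + (1 - \<alpha>) * deriv rm v"
    using eventually_gt_at_top[of v0]
    by eventually_elim (use \<alpha> horizons slope in \<open>auto simp: z_def intro!: convex_combination_supersolution\<close>)
  have "continuous_on (UNIV \<times> {0<..}) (\<lambda>(v, r). h v r)"
    unfolding h_def by (rule continuous_on_subset[OF continuous_on_metric_h[OF A_cont F_cont]]) auto
  moreover have "h v differentiable (at r)" if "0 < r" for v r
    unfolding h_def using A_smooth[of r 0 v] F_smooth[of r 0 v] that
    by (intro metric_h_differentiable) simp_all
  moreover have "continuous_on {0<..} (deriv (h v))" for v
    unfolding h_def by (intro continuous_on_deriv_metric_h A_smooth F_smooth)
  ultimately show ?thesis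
    using U[of 1] \<open>0 < \<delta>\<close> rm_diff case3 rp_diff horizons rm_lim rp_lim z_deriv z_between z_super
    by (intro class2_if_eventual_supersolution[where z = z]) auto
qed

end
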